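(* Let $s>0$, $Y>3s$, and for $\tau\geq 0$ put $x_+(\tau)=\frac sYe^{s\tau}$, $\tau^*=\frac1s\ln\left(\frac Y{3s}\right)$, $\tau_c=\frac1s\ln\left(\frac Ys\right)$. Consider the delay system $\dot x=x(1-x)-yx$, $\dot y=-sy+Ye^{-s\tau}y(t-\tau)x(t-\tau)$, its coexistence equilibrium $E_+=(x_+(\tau),1-x_+(\tau))$ (positive for $\tau\in[0,\tau_c)$), and the characteristic equation of its linearization at $E_+$, \[ \lambda^2+s\left(1+\tfrac{e^{s\tau}}{Y}\right)\lambda+\left(-s\lambda+s\left(1-\tfrac{2se^{s\tau}}{Y}\right)\right)e^{-\lambda\tau}+\tfrac{s^2e^{s\tau}}{Y}=0. \tag{C} \] Define on $[0,\tau^*]$ \[ \omega_+(\tau)=\sqrt{\tfrac12\left(-x_+(\tau)^2+\sqrt{x_+(\tau)^4+s^2\left(12x_+(\tau)^2-16x_+(\tau)+4\right)}\right)}, \] \[ h_2(\omega,\tau)=\frac{\omega^2(1+s-x_+(\tau))-(1-2x_+(\tau))s\,x_+(\tau)}{s\left((1-2x_+(\tau))^2+\omega^2\right)},\qquad \theta(\tau)=\arccos\big(h_2(\omega_+(\tau),\tau)\big), \] and for each integer $n\geq0$ let $\tau_n^1<\dots<\tau_n^{j_n}$ be the points $\tau\in(0,\tau^* )$ with $\tau\omega_+(\tau)=\theta(\tau)+2n\pi$. Assume there exists an integer $N\geq0$ such that $(2N+1)\pi\leq\max_{\tau\in[0,\tau^*]}\tau\omega_+(\tau)\leq2(N+1)\pi$.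 Then: \begin{enumerate} \item For $0\leq n\leq N$, the curves $\theta(\tau)+2n\pi$ and $\tau\omega_+(\tau)$ intersect at least twice in $(0,\tau^* )$. \item For $n\geq N+1$, the curves $\theta(\tau)+2n\pi$ and $\tau\omega_+(\tau)$ do not intersect in $(0,\tau^* )$. \item If $\theta(\tau)+2n\pi$ and $\tau\omega_+(\tau)$ intersect for some $n\geq0$, then $\tau_0^1$ is the smallest and $\tau_0^{j_0}$ the largest value of $\tau$ for which (C) has a pair of purely imaginary roots. \item $E_+$ is locally asymptotically stable for $\tau\in[0,\tau_0^1)\cup(\tau_0^{j_0},\tau_c)$. \end{enumerate}
   Context: Local asymptotic stability of $E_+$ means all roots of (C) have negative real part. *)

theory Defs
  imports "HOL-Analysis.Analysis"
begin

definition xplus :: "real \<Rightarrow> real \<Rightarrow> real \<Rightarrow> real" where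
  "xplus s Y \<tau> = s / Y * exp (s * \<tau>)"

definition tau_star :: "real \<Rightarrow> real \<Rightarrow> real" where
  "tau_star s Y = ln (Y / (3 * s)) / s"

definition tau_c :: "real \<Rightarrow> real \<Rightarrow> real" where
  "tau_c s Y = ln (Y / s) / s"

definition charC :: "real \<Rightarrow> real \<Rightarrow> real \<Rightarrow> complex \<Rightarrow> complex" where
  "charC s Y \<tau> z =
     z^2 + complex_of_real (s * (1 + exp (s * \<tau>) / Y)) * z
     + (- complex_of_real s * z + complex_of_real (s * (1 - 2 * s * exp (s * \<tau>) / Y)))
         * exp (- z * complex_of_real \<tau>)
     + complex_of_real (s^2 * exp (s * \<tau>) / Y)"

definition LAS :: "real \<Rightarrow> real \<Rightarrow> real \<Rightarrow> bool" where
  "LAS s Y \<tau> \<longleftrightarrow> (\<forall>z. charC s Y \<tau> z = 0 \<longrightarrow> Re z < 0)"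

definition has_imag_pair :: "real \<Rightarrow> real \<Rightarrow> real \<Rightarrow> bool" where
  "has_imag_pair s Y \<tau> \<longleftrightarrow> (\<exists>\<omega>>0. charC s Y \<tau> (\<i> * complex_of_real \<omega>) = 0
                                   \<and> charC s Y \<tau> (- \<i> * complex_of_real \<omega>) = 0)"

definition omega_plus :: "real \<Rightarrow> real \<Rightarrow> real \<Rightarrow> real" where
  "omega_plus s Y \<tau> = (let x = xplus s Y \<tau> in
     sqrt ((1/2) * (sqrt (x^4 + s^2 * (12 * x^2 - 16 * x + 4)) - x^2)))"

definition h2 :: "real \<Rightarrow> real \<Rightarrow> real \<Rightarrow> real \<Rightarrow> real" where
  "h2 s Y \<omega> \<tau> = (let x = xplus s Y \<tau> in
     (\<omega>^2 * (1 + s - x) - (1 - 2 * x) * s * x) / (s * ((1 - 2 * x)^2 + \<omega>^2)))"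

definition theta :: "real \<Rightarrow> real \<Rightarrow> real \<Rightarrow> real" where
  "theta s Y \<tau> = arccos (h2 s Y (omega_plus s Y \<tau>) \<tau>)"

definition crossings :: "real \<Rightarrow> real \<Rightarrow> nat \<Rightarrow> real set" where
  "crossings s Y n = {\<tau>. 0 < \<tau> \<and> \<tau> < tau_star s Y \<and>
      \<tau> * omega_plus s Y \<tau> = theta s Y \<tau> + 2 * real n * pi}"

definition least_elem :: "real set \<Rightarrow> real \<Rightarrow> bool" where
  "least_elem A a \<longleftrightarrow> a \<in> A \<and> (\<forall>x\<in>A. a \<le> x)"

definition greatest_elem :: "real set \<Rightarrow> real \<Rightarrow> bool" where
  "greatest_elem A a \<longleftrightarrow> a \<in> A \<and> (\<forall>x\<in>A. x \<le> a)"

end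

(*
  Write (C) as P(\<lambda>) + Q(\<lambda>) e^(-\<lambda>\<tau>) = 0 with x = x_+(\<tau>), P(\<lambda>) = \<lambda>^2 + (s + x) \<lambda> + s x
  and Q(\<lambda>) = s (1 - 2x) - s \<lambda>. At a root i\<omega>, \<omega> > 0, taking moduli gives
  \<omega>^4 + x^2 \<omega>^2 = s^2 (1 - x)(1 - 3x), which forces x < 1/3 (i.e. \<tau> < \<tau>^* ) and
  \<omega> = \<omega>_+(\<tau>); solving the real and imaginary parts for cos \<omega>\<tau> and sin \<omega>\<tau> gives
  cos \<omega>\<tau> = h_2 and sin \<omega>\<tau> > 0, so \<omega>\<tau> = \<theta>(\<tau>) + 2n\<pi>. Conversely every such \<tau> yields
  a root. Hence the delays with imaginary roots are exactly the solutions of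
  \<tau> \<omega>_+(\<tau>) - \<theta>(\<tau>) = 2n\<pi> in (0, \<tau>^* ). This continuous gap is negative at \<tau> = 0 and
  equals -\<pi> at \<tau>^*, because 0 < \<theta> < \<pi> on [0, \<tau>^* ), \<omega>_+(\<tau>^* ) = 0 and \<theta>(\<tau>^* ) = \<pi>.
  The intermediate value theorem therefore gives parts 1-3: every level 2n\<pi> that is
  reached lies between two zeros of the gap.

  For part 4, E_+ is stable at \<tau> = 0, where (C) is a quadratic with positive
  coefficients, and for \<tau> \<in> (\<tau>^*, \<tau>_c), where |Q| < |P| on the closed right half-plane.
  Roots in the closed right half-plane are bounded uniformly in \<tau>. So, by Hurwitz's
  theorem, the set of stable delays is open and closed in any interval that contains
  no delay with imaginary roots. Connectedness then spreads stability over
  [0, \<tau>_0^1) and (\<tau>_0^(j_0), \<tau>_c).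
*)

theory Submission
  imports Defs "HOL-Complex_Analysis.Great_Picard"
begin

section \<open>Imaginary roots in terms of x = x_+(\<tau>)\<close>

text \<open>|P(i\<omega>)|^2 - |Q(i\<omega>)|^2, which vanishes at a root i\<omega> of (C).\<close>
definition freq_poly :: "real \<Rightarrow> real \<Rightarrow> real \<Rightarrow> real" where
  "freq_poly s x \<omega> = \<omega>^4 + x^2 * \<omega>^2 - s^2 * (1 - x) * (1 - 3 * x)"

definition omega_x :: "real \<Rightarrow> real \<Rightarrow> real" where
  "omega_x s x = sqrt ((1/2) * (sqrt (x^4 + s^2 * (12 * x^2 - 16 * x + 4)) - x^2))"

definition crossing_cos :: "real \<Rightarrow> real \<Rightarrow> real \<Rightarrow> real" where
  "crossing_cos s x \<omega> =
     (\<omega>^2 * (1 + s - x) - (1 - 2 * x) * s * x) / (s * ((1 - 2 * x)^2 + \<omega>^2))"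

definition crossing_sin :: "real \<Rightarrow> real \<Rightarrow> real \<Rightarrow> real" where
  "crossing_sin s x \<omega> =
     \<omega> * ((s + x) * (1 - 2 * x) + s * x - \<omega>^2) / (s * ((1 - 2 * x)^2 + \<omega>^2))"

text \<open>Real and imaginary parts of (C) at \<lambda> = i\<omega>, with c = cos \<omega>\<tau> and d = sin \<omega>\<tau>.\<close>
definition imag_root_system :: "real \<Rightarrow> real \<Rightarrow> real \<Rightarrow> real \<Rightarrow> real \<Rightarrow> bool" where
  "imag_root_system s x \<omega> c d \<longleftrightarrow>
     s * x - \<omega>^2 + s * (1 - 2 * x) * c - s * \<omega> * d = 0 \<and>
     (s + x) * \<omega> - s * (1 - 2 * x) * d - s * \<omega> * c = 0"

lemma omega_plus_eq: "omega_plus s Y \<tau> = omega_x s (xplus s Y \<tau>)"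
  unfolding omega_plus_def omega_x_def Let_def ..

lemma h2_eq: "h2 s Y \<omega> \<tau> = crossing_cos s (xplus s Y \<tau>) \<omega>"
  unfolding h2_def crossing_cos_def Let_def ..

lemma omega_x_root:
  assumes "x \<le> 1/3"
  shows "0 \<le> omega_x s x" "freq_poly s x (omega_x s x) = 0"
proof -
  define K where "K = s^2 * (1 - x) * (1 - 3 * x)"
  define r where "r = sqrt (x^4 + s^2 * (12 * x^2 - 16 * x + 4))"
  have "K \<ge> 0" unfolding K_def using assms by simp
  have disc: "x^4 + s^2 * (12 * x^2 - 16 * x + 4) = (x^2)^2 + 4 * K"
    unfolding K_def by (simp add: algebra_simps power2_eq_square power4_eq_xxxx)
  have r2: "r^2 = (x^2)^2 + 4 * K" unfolding r_def disc using \<open>K \<ge> 0\<close> by simp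
  have "x^2 = sqrt ((x^2)^2)" by (simp only: real_sqrt_abs abs_power2)
  also have "\<dots> \<le> r" unfolding r_def disc using \<open>K \<ge> 0\<close> by (intro real_sqrt_le_mono) simp
  finally have "x^2 \<le> r" .
  then show "0 \<le> omega_x s x" unfolding omega_x_def r_def[symmetric] by simp
  have w2: "(omega_x s x)^2 = (r - x^2) / 2"
    using \<open>x^2 \<le> r\<close> unfolding omega_x_def r_def[symmetric] by simp
  have "(omega_x s x)^4 = ((omega_x s x)^2)^2" by simp
  then show "freq_poly s x (omega_x s x) = 0"
    unfolding freq_poly_def K_def[symmetric] using w2 r2 by algebra
qed

lemma omega_x_pos:
  assumes "s \<noteq> 0" "x < 1/3"
  shows "0 < omega_x s x"
proof -
  have "s^2 * (1 - x) * (1 - 3 * x) > 0" using assms by simp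
  then have "omega_x s x \<noteq> 0" using omega_x_root(2)[of x s] assms by (auto simp: freq_poly_def)
  then show ?thesis using omega_x_root(1)[of x s] assms by simp
qed

lemma omega_x_third: "omega_x s (1/3) = 0"
proof -
  have disc: "(1/3::real)^4 + s^2 * (12 * (1/3)^2 - 16 * (1/3) + 4) = (1/9)^2"
    by (simp add: power2_eq_square power4_eq_xxxx)
  show ?thesis unfolding omega_x_def disc by (simp only: real_sqrt_abs) (simp add: power2_eq_square)
qed

lemma omega_x_unique:
  assumes "0 < \<omega>" "freq_poly s x \<omega> = 0"
  shows "\<omega> = omega_x s x"
proof -
  have "x^4 + s^2 * (12 * x^2 - 16 * x + 4) = (2 * \<omega>^2 + x^2)^2"
    using assms(2) unfolding freq_poly_def by (simp add: algebra_simps power2_eq_square power4_eq_xxxx)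
  then have "omega_x s x = sqrt (\<omega>^2)" unfolding omega_x_def by simp
  then show ?thesis using assms(1) by simp
qed

lemma omega_x_sq_less:
  assumes "0 < s" "0 < x" "x \<le> 1/3"
  shows "(omega_x s x)^2 < (s + x) * (1 - 2 * x) + s * x"
proof (rule ccontr)
  define w where "w = (omega_x s x)^2"
  define T where "T = (s + x) * (1 - 2 * x) + s * x"
  assume "\<not> ?thesis"
  then have "T \<le> w" unfolding w_def T_def by simp
  have "T \<ge> s * (1 - x)" unfolding T_def using assms by (simp add: algebra_simps)
  moreover have "s * (1 - x) > 0" using assms by simp
  ultimately have "s * (1 - x) \<le> w" "0 < w" using \<open>T \<le> w\<close> by linarith+
  then have "(s * (1 - x))^2 \<le> w^2" "0 < x^2 * w"
    using \<open>s * (1 - x) > 0\<close> assms(2) by (simp_all add: power_mono)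
  then have "w^2 + x^2 * w > (s * (1 - x))^2" by linarith
  moreover have "(s * (1 - x))^2 \<ge> s^2 * (1 - x) * (1 - 3 * x)"
    using assms by (simp add: power2_eq_square algebra_simps mult_left_mono)
  moreover have "w^2 + x^2 * w = s^2 * (1 - x) * (1 - 3 * x)"
    using omega_x_root(2)[OF assms(3)] unfolding w_def freq_poly_def by simp
  ultimately show False by linarith
qed

lemma imag_root_system_iff:
  assumes "0 < s" "0 < \<omega>"
  shows "imag_root_system s x \<omega> c d \<longleftrightarrow> c = crossing_cos s x \<omega> \<and> d = crossing_sin s x \<omega>"
proof -
  define D where "D = s * ((1 - 2 * x)^2 + \<omega>^2)"
  define A where "A = \<omega>^2 * (1 + s - x) - (1 - 2 * x) * s * x"
  define B where "B = \<omega> * ((s + x) * (1 - 2 * x) + s * x - \<omega>^2)"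
  have "D \<noteq> 0" unfolding D_def using assms by (simp add: add_nonneg_pos)
  have cos_sin: "crossing_cos s x \<omega> = A / D" "crossing_sin s x \<omega> = B / D"
    unfolding crossing_cos_def crossing_sin_def A_def B_def D_def by simp_all
  show ?thesis
  proof
    assume "imag_root_system s x \<omega> c d"
    then have "c * D = A" "d * D = B"
      unfolding imag_root_system_def A_def B_def D_def by algebra+
    then show "c = crossing_cos s x \<omega> \<and> d = crossing_sin s x \<omega>"
      unfolding cos_sin using \<open>D \<noteq> 0\<close> by (simp add: eq_divide_eq)
  next
    assume "c = crossing_cos s x \<omega> \<and> d = crossing_sin s x \<omega>"
    then have "c * D = A" "d * D = B" unfolding cos_sin using \<open>D \<noteq> 0\<close> by simp_all
    then have "D * (s * x - \<omega>^2 + s * (1 - 2 * x) * c - s * \<omega> * d) = 0"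
      "D * ((s + x) * \<omega> - s * (1 - 2 * x) * d - s * \<omega> * c) = 0"
      unfolding A_def B_def D_def by algebra+
    then show "imag_root_system s x \<omega> c d"
      unfolding imag_root_system_def using \<open>D \<noteq> 0\<close> by simp
  qed
qed

lemma crossing_cos_sin_sq:
  assumes "0 < s" "0 < (1 - 2 * x)^2 + \<omega>^2" "freq_poly s x \<omega> = 0"
  shows "(crossing_cos s x \<omega>)^2 + (crossing_sin s x \<omega>)^2 = 1"
proof -
  define D where "D = s * ((1 - 2 * x)^2 + \<omega>^2)"
  have "0 < D" unfolding D_def using assms by simp
  then have "D \<noteq> 0" by simp
  have "(\<omega>^2 * (1 + s - x) - (1 - 2 * x) * s * x)^2
      + (\<omega> * ((s + x) * (1 - 2 * x) + s * x - \<omega>^2))^2 = D^2"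
    using assms(3) unfolding D_def freq_poly_def by algebra
  then show ?thesis
    unfolding crossing_cos_def crossing_sin_def D_def[symmetric] using \<open>D \<noteq> 0\<close>
    by (simp add: power_divide add_divide_distrib[symmetric])
qed

lemma crossing_sin_pos:
  assumes "0 < s" "0 < x" "x < 1/3"
  shows "0 < crossing_sin s x (omega_x s x)"
proof -
  have "0 < omega_x s x" using omega_x_pos assms by simp
  moreover have "0 < (s + x) * (1 - 2 * x) + s * x - (omega_x s x)^2"
    using omega_x_sq_less[of s x] assms by simp
  moreover have "0 < s * ((1 - 2 * x)^2 + (omega_x s x)^2)"
    using assms by (simp add: add_pos_nonneg)
  ultimately show ?thesis unfolding crossing_sin_def by simp
qed

lemma imag_root_system_freq_poly:
  assumes "imag_root_system s x \<omega> c d" "c^2 + d^2 = 1"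
  shows "freq_poly s x \<omega> = 0"
  using assms unfolding imag_root_system_def freq_poly_def by algebra

lemma eq_arccos_cos_plus_2npi:
  fixes a :: real
  assumes "0 < a" "0 < sin a"
  shows "\<exists>n::nat. a = arccos (cos a) + 2 * real n * pi"
proof -
  have "sin (arccos (cos a)) = sqrt ((sin a)^2)"
    using sin_arccos_abs[of "cos a"] by (simp add: sin_squared_eq)
  then have "sin a = sin (arccos (cos a)) \<and> cos a = cos (arccos (cos a))"
    using assms(2) by simp
  then obtain k :: int where k: "a = arccos (cos a) + 2 * pi * k"
    using sin_cos_eq_iff by blast
  have "0 \<le> k"
  proof (rule ccontr)
    assume "\<not> 0 \<le> k"
    then have "2 * pi * k \<le> 2 * pi * (-1)" by (intro mult_left_mono) simp_all
    moreover have "arccos (cos a) \<le> pi" by (simp add: arccos_ubound)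
    ultimately show False using k assms(1) pi_gt_zero by linarith
  qed
  then have "a = arccos (cos a) + 2 * real (nat k) * pi" using k by (simp add: algebra_simps)
  then show ?thesis ..
qed

lemma charC_eq:
  "charC s Y \<tau> z = z^2 + of_real (s + xplus s Y \<tau>) * z
     + (of_real (s * (1 - 2 * xplus s Y \<tau>)) - of_real s * z) * exp (- z * of_real \<tau>)
     + of_real (s * xplus s Y \<tau>)"
  unfolding charC_def xplus_def by (simp add: field_simps power2_eq_square)

lemma charC_zero: "charC s Y \<tau> 0 = of_real (s * (1 - xplus s Y \<tau>))"
  unfolding charC_eq by (simp add: algebra_simps)

lemma charC_cnj: "charC s Y \<tau> (cnj z) = cnj (charC s Y \<tau> z)"
  unfolding charC_def by (simp add: exp_cnj)

lemma charC_imag_root_iff: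
  "charC s Y \<tau> (\<i> * of_real \<omega>) = 0 \<longleftrightarrow>
     imag_root_system s (xplus s Y \<tau>) \<omega> (cos (\<omega> * \<tau>)) (sin (\<omega> * \<tau>))"
  unfolding complex_eq_iff charC_eq imag_root_system_def
  by (simp add: Re_exp Im_exp power2_eq_square algebra_simps)

lemma has_imag_pair_iff: "has_imag_pair s Y \<tau> \<longleftrightarrow> (\<exists>\<omega>>0. charC s Y \<tau> (\<i> * of_real \<omega>) = 0)"
proof -
  have "charC s Y \<tau> (- \<i> * of_real \<omega>) = cnj (charC s Y \<tau> (\<i> * of_real \<omega>))" for \<omega>
    using charC_cnj[of s Y \<tau> "\<i> * of_real \<omega>"] by simp
  then show ?thesis unfolding has_imag_pair_def by simp
qed

lemma imag_axis_root_imp_has_imag_pair: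
  assumes "charC s Y \<tau> z = 0" "Re z = 0" "z \<noteq> 0"
  shows "has_imag_pair s Y \<tau>"
proof (cases "Im z > 0")
  case True
  moreover have "z = \<i> * of_real (Im z)" using assms(2) by (simp add: complex_eq_iff)
  ultimately show ?thesis unfolding has_imag_pair_iff using assms(1) by metis
next
  case False
  then have "Im z < 0" using assms(2,3) by (simp add: complex_eq_iff)
  moreover have "cnj z = \<i> * of_real (- Im z)" using assms(2) by (simp add: complex_eq_iff)
  moreover have "charC s Y \<tau> (cnj z) = 0" unfolding charC_cnj assms(1) by simp
  ultimately show ?thesis unfolding has_imag_pair_iff by (metis neg_0_less_iff_less)
qed

lemma xplus_less_iff:
  assumes "0 < s" "0 < Y" "0 < c"
  shows "xplus s Y \<tau> < c \<longleftrightarrow> \<tau> < ln (c * Y / s) / s"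
proof -
  have "xplus s Y \<tau> < c \<longleftrightarrow> exp (s * \<tau>) < exp (ln (c * Y / s))"
    unfolding xplus_def using assms by (simp add: field_simps)
  also have "\<dots> \<longleftrightarrow> \<tau> < ln (c * Y / s) / s"
    using assms(1) by (simp add: pos_less_divide_eq mult.commute)
  finally show ?thesis .
qed

lemma xplus_le_iff:
  assumes "0 < s" "0 < Y" "0 < c"
  shows "xplus s Y \<tau> \<le> c \<longleftrightarrow> \<tau> \<le> ln (c * Y / s) / s"
proof -
  have "xplus s Y \<tau> \<le> c \<longleftrightarrow> exp (s * \<tau>) \<le> exp (ln (c * Y / s))"
    unfolding xplus_def using assms by (simp add: field_simps)
  also have "\<dots> \<longleftrightarrow> \<tau> \<le> ln (c * Y / s) / s"
    using assms(1) by (simp add: pos_le_divide_eq mult.commute)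
  finally show ?thesis .
qed

section \<open>Zeros of holomorphic families crossing the imaginary axis\<close>

text \<open>Zeros of F t in the closed right half-plane stay in cball 0 R while t \<in> J, so
  they can enter or leave it only through the imaginary axis.\<close>
locale right_half_plane_root_family =
  fixes F :: "real \<Rightarrow> complex \<Rightarrow> complex" and J :: "real set" and R :: real
  assumes continuous_F: "continuous_on UNIV (\<lambda>(t, z). F t z)"
    and holomorphic_F: "\<And>t. F t holomorphic_on {z. 0 < Re z}"
    and root_bound: "\<And>t z. t \<in> J \<Longrightarrow> F t z = 0 \<Longrightarrow> 0 \<le> Re z \<Longrightarrow> cmod z \<le> R"
begin

lemma uniform_limit_F:
  assumes "compact K" "ts \<longlonglongrightarrow> t0"
  shows "uniform_limit K (\<lambda>n. F (ts n)) (F t0) sequentially"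
proof (rule uniform_limitI)
  fix e :: real assume "0 < e"
  have "uniformly_continuous_on (cball t0 1 \<times> K) (\<lambda>(t, z). F t z)"
    using assms(1) continuous_on_subset[OF continuous_F]
    by (intro compact_uniformly_continuous compact_Times) auto
  then obtain d where "0 < d" and d: "\<And>p p'. p \<in> cball t0 1 \<times> K \<Longrightarrow> p' \<in> cball t0 1 \<times> K \<Longrightarrow>
      dist p' p < d \<Longrightarrow> dist ((\<lambda>(t, z). F t z) p') ((\<lambda>(t, z). F t z) p) < e"
    unfolding uniformly_continuous_on_def using \<open>0 < e\<close> by metis
  have "\<forall>\<^sub>F n in sequentially. dist (ts n) t0 < min d 1"
    using tendstoD[OF assms(2), of "min d 1"] \<open>0 < d\<close> by simp
  then show "\<forall>\<^sub>F n in sequentially. \<forall>z\<in>K. dist (F (ts n) z) (F t0 z) < e"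
  proof (rule eventually_mono, intro ballI)
    fix n z assume "dist (ts n) t0 < min d 1" "z \<in> K"
    then show "dist (F (ts n) z) (F t0 z) < e"
      using d[of "(t0, z)" "(ts n, z)"] by (simp add: dist_Pair_Pair dist_commute)
  qed
qed

lemma closed_unstable: "closed {t. \<exists>z\<in>cball 0 R. F t z = 0 \<and> 0 \<le> Re z}"
proof -
  have "continuous_on UNIV (\<lambda>p. (\<lambda>(t, z). F t z) (snd p, fst p))"
    by (rule continuous_on_compose2[OF continuous_F])
      (auto intro!: continuous_on_Pair continuous_on_fst continuous_on_snd continuous_on_id)
  then have "continuous_on UNIV (\<lambda>p. F (snd p) (fst p))" by simp
  then have "closed {p. F (snd p) (fst p) = 0 \<and> 0 \<le> Re (fst p)}"
    by (intro closed_Collect_conj closed_Collect_eq closed_Collect_le continuous_intros) auto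
  from closed_compact_projection[OF compact_cball this, of 0 R] show ?thesis
    by (simp add: Bex_def)
qed

lemma stable_limit:
  assumes "ts \<longlonglongrightarrow> t0" "t0 \<in> J"
    and stable: "\<And>n. \<forall>z. F (ts n) z = 0 \<longrightarrow> Re z < 0"
    and no_imag: "\<And>z. Re z = 0 \<Longrightarrow> F t0 z \<noteq> 0"
  shows "\<forall>z. F t0 z = 0 \<longrightarrow> Re z < 0"
proof (intro allI impI)
  fix z assume root: "F t0 z = 0"
  show "Re z < 0"
  proof (rule ccontr)
    assume "\<not> Re z < 0"
    then have "0 < Re z" using no_imag root by force
    define w where "w = complex_of_real (R + 1)"
    have "0 \<le> R" using root_bound[OF assms(2) root] \<open>0 < Re z\<close> norm_ge_zero[of z] by linarith
    then have "0 < Re w" "F t0 w \<noteq> 0" unfolding w_def using root_bound[OF assms(2)] by force+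
    then have "\<not> F t0 constant_on {z. 0 < Re z}"
      using root \<open>0 < Re z\<close> unfolding constant_on_def by force
    then have "F t0 z \<noteq> 0"
      using Hurwitz_no_zeros[of "{z. 0 < Re z}" "\<lambda>n. F (ts n)" "F t0" z] stable \<open>0 < Re z\<close>
        open_halfspace_Re_gt convex_connected convex_halfspace_Re_gt holomorphic_F
        uniform_limit_F[OF _ assms(1)] by fastforce
    then show False using root by simp
  qed
qed

lemma stable_on_connected:
  assumes "connected K" "K \<subseteq> J" "t0 \<in> K" "\<forall>z. F t0 z = 0 \<longrightarrow> Re z < 0"
    and no_imag: "\<And>t z. t \<in> K \<Longrightarrow> Re z = 0 \<Longrightarrow> F t z \<noteq> 0"
    and "t \<in> K"
  shows "\<forall>z. F t z = 0 \<longrightarrow> Re z < 0"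
proof -
  define U where "U = {t. \<exists>z\<in>cball 0 R. F t z = 0 \<and> 0 \<le> Re z}"
  define G where "G = {t \<in> K. \<forall>z. F t z = 0 \<longrightarrow> Re z < 0}"
  have "G = K \<inter> - U"
    unfolding G_def U_def using assms(2) root_bound by (force simp: not_less)
  then have "openin (top_of_set K) G"
    using closed_unstable unfolding U_def by (simp add: openin_open_Int open_Compl)
  moreover have "closedin (top_of_set K) G"
    unfolding closedin_limpt
  proof (intro conjI allI impI)
    show "G \<subseteq> K" unfolding G_def by auto
    fix t assume "t islimpt G \<and> t \<in> K"
    then obtain ts where "\<And>n. ts n \<in> G" "ts \<longlonglongrightarrow> t" "t \<in> K"
      unfolding islimpt_sequential by blast
    then show "t \<in> G"
      using stable_limit[of ts t] assms(2) no_imag unfolding G_def by blast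
  qed
  ultimately have "G = {} \<or> G = K" using assms(1) unfolding connected_clopen by blast
  then show ?thesis using assms(3,4,6) unfolding G_def by blast
qed

end

lemma quadratic_root_Re_neg:
  fixes z :: complex
  assumes "0 < a" "0 < b" "z^2 + of_real a * z + of_real b = 0"
  shows "Re z < 0"
proof (rule ccontr)
  assume "\<not> Re z < 0"
  have "Im z * (2 * Re z + a) = 0"
    using arg_cong[OF assms(3), of Im] by (simp add: power2_eq_square algebra_simps)
  moreover have "0 < 2 * Re z + a" using \<open>\<not> Re z < 0\<close> assms(1) by simp
  ultimately have "Im z = 0" by simp
  then have "Re z * Re z + a * Re z + b = 0"
    using arg_cong[OF assms(3), of Re] by (simp add: power2_eq_square)
  moreover have "0 \<le> Re z * Re z + a * Re z" using \<open>\<not> Re z < 0\<close> assms(1) by simp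
  ultimately show False using assms(2) by linarith
qed

lemma delay_coeff_dominated:
  fixes z :: complex
  assumes "0 < s" "1/3 < x" "x < 1" "0 \<le> Re z"
  shows "cmod (of_real (s * (1 - 2 * x)) - of_real s * z)
    < cmod (z^2 + of_real (s + x) * z + of_real (s * x))"
proof -
  define u v where "u = Re z" and "v = Im z"
  have "(cmod (z^2 + of_real (s + x) * z + of_real (s * x)))^2
      - (cmod (of_real (s * (1 - 2 * x)) - of_real s * z))^2 =
      (u * u + (2 * s + x) * u + s * (3 * x - 1)) * (u * u + x * u + s * (1 - x))
      + v * v * (2 * u * u + 2 * (s + x) * u + x * x) + (v * v) * (v * v)"
    unfolding cmod_power2 u_def v_def by (simp add: power2_eq_square algebra_simps)
  moreover have "0 < (u * u + (2 * s + x) * u + s * (3 * x - 1)) * (u * u + x * u + s * (1 - x))"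
    using assms unfolding u_def by (intro mult_pos_pos add_nonneg_pos) simp_all
  moreover have "0 \<le> v * v * (2 * u * u + 2 * (s + x) * u + x * x)"
    using assms unfolding u_def by simp
  moreover have "0 \<le> (v * v) * (v * v)" by simp
  ultimately have "(cmod (of_real (s * (1 - 2 * x)) - of_real s * z))^2
      < (cmod (z^2 + of_real (s + x) * z + of_real (s * x)))^2"
    by linarith
  then show ?thesis by (rule power_less_imp_less_base) simp
qed

lemma charC_root_norm_le:
  assumes "0 < s" "0 \<le> \<tau>" "0 \<le> xplus s Y \<tau>" "xplus s Y \<tau> \<le> 1"
    and root: "charC s Y \<tau> z = 0" and "0 \<le> Re z"
  shows "cmod z \<le> 2 * s + 2"
proof -
  define x where "x = xplus s Y \<tau>"
  define A where "A = of_real (s + x) * z"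
  define B where "B = (of_real (s * (1 - 2 * x)) - of_real s * z) * exp (- z * of_real \<tau>)"
  define C where "C = (of_real (s * x) :: complex)"
  have x: "0 \<le> x" "x \<le> 1" using assms(3,4) unfolding x_def by auto
  have "z^2 = - (A + B + C)"
    using root unfolding charC_eq A_def B_def C_def x_def by (simp add: algebra_simps add_eq_0_iff)
  then have "(cmod z)^2 \<le> cmod A + cmod B + cmod C"
    by (metis norm_minus_cancel norm_power norm_triangle_le norm_triangle_ineq add_right_mono)
  moreover have "cmod A \<le> (s + 1) * cmod z"
    unfolding A_def norm_mult norm_of_real using x assms(1) by (intro mult_right_mono) auto
  moreover have "cmod B \<le> s + s * cmod z"
  proof -
    have "cmod (exp (- z * of_real \<tau>)) \<le> 1"
      unfolding norm_exp_eq_Re using assms(2,6) by (simp add: mult_nonneg_nonneg)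
    then have "cmod B \<le> cmod (of_real (s * (1 - 2 * x)) - of_real s * z)"
      unfolding B_def norm_mult by (simp add: mult_left_le)
    also have "\<dots> \<le> cmod (of_real (s * (1 - 2 * x)) :: complex) + cmod (of_real s * z)"
      by (rule norm_triangle_ineq4)
    also have "\<dots> = \<bar>s * (1 - 2 * x)\<bar> + s * cmod z"
      unfolding norm_mult norm_of_real using assms(1) by simp
    also have "\<bar>s * (1 - 2 * x)\<bar> \<le> s" using x assms(1) by (auto simp: abs_mult abs_le_iff)
    finally show ?thesis by simp
  qed
  moreover have "cmod C \<le> s" unfolding C_def norm_of_real using x assms(1) by (simp add: abs_mult mult_left_le)
  ultimately have "cmod z * (cmod z - (2 * s + 1)) \<le> 2 * s"
    by (simp add: power2_eq_square algebra_simps)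
  then show ?thesis
  proof (rule contrapos_pp)
    assume "\<not> cmod z \<le> 2 * s + 2"
    then have "0 < cmod z" "1 < cmod z - (2 * s + 1)" using assms(1) by linarith+
    then have "cmod z * 1 < cmod z * (cmod z - (2 * s + 1))" by (rule mult_strict_left_mono[rotated])
    then show "\<not> cmod z * (cmod z - (2 * s + 1)) \<le> 2 * s" using \<open>\<not> cmod z \<le> 2 * s + 2\<close> by simp
  qed
qed

section \<open>Crossing delays and stability of E_+\<close>

definition phase_gap :: "real \<Rightarrow> real \<Rightarrow> real \<Rightarrow> real" where
  "phase_gap s Y \<tau> = \<tau> * omega_plus s Y \<tau> - theta s Y \<tau>"

definition imag_pair_delays :: "real \<Rightarrow> real \<Rightarrow> real set" where
  "imag_pair_delays s Y = {\<tau>. 0 \<le> \<tau> \<and> \<tau> < tau_c s Y \<and> has_imag_pair s Y \<tau>}"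

context
  fixes s Y :: real
  assumes s_pos: "0 < s" and Y_gt: "3 * s < Y"
begin

lemma Y_pos: "0 < Y"
  using s_pos Y_gt by simp

lemma xplus_pos: "0 < xplus s Y \<tau>"
  unfolding xplus_def using s_pos Y_pos by simp

lemma xplus_less_third_iff: "xplus s Y \<tau> < 1/3 \<longleftrightarrow> \<tau> < tau_star s Y"
  using xplus_less_iff[OF s_pos Y_pos, of "1/3"] unfolding tau_star_def by simp

lemma xplus_le_third_iff: "xplus s Y \<tau> \<le> 1/3 \<longleftrightarrow> \<tau> \<le> tau_star s Y"
  using xplus_le_iff[OF s_pos Y_pos, of "1/3"] unfolding tau_star_def by simp

lemma xplus_less_one_iff: "xplus s Y \<tau> < 1 \<longleftrightarrow> \<tau> < tau_c s Y"
  using xplus_less_iff[OF s_pos Y_pos, of 1] unfolding tau_c_def by simp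

lemma xplus_tau_star: "xplus s Y (tau_star s Y) = 1/3"
  using xplus_less_third_iff[of "tau_star s Y"] xplus_le_third_iff[of "tau_star s Y"] by simp

lemma tau_star_pos: "0 < tau_star s Y"
proof -
  have "xplus s Y 0 < 1/3" unfolding xplus_def using s_pos Y_gt by (simp add: field_simps)
  then show ?thesis using xplus_less_third_iff by simp
qed

lemma tau_star_less_tau_c: "tau_star s Y < tau_c s Y"
  using xplus_less_one_iff[of "tau_star s Y"] xplus_tau_star by simp

lemma omega_plus_pos: "\<tau> < tau_star s Y \<Longrightarrow> 0 < omega_plus s Y \<tau>"
  unfolding omega_plus_eq using omega_x_pos s_pos xplus_less_third_iff by simp

lemma omega_plus_tau_star: "omega_plus s Y (tau_star s Y) = 0"
  unfolding omega_plus_eq xplus_tau_star by (rule omega_x_third)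

lemma h2_omega_plus_sq:
  assumes "\<tau> \<le> tau_star s Y"
  shows "(h2 s Y (omega_plus s Y \<tau>) \<tau>)^2
    + (crossing_sin s (xplus s Y \<tau>) (omega_plus s Y \<tau>))^2 = 1"
proof -
  let ?x = "xplus s Y \<tau>"
  have "?x \<le> 1/3" using assms xplus_le_third_iff by simp
  then have "0 < (1 - 2 * ?x)^2 + (omega_x s ?x)^2" by (simp add: add_pos_nonneg)
  then show ?thesis
    unfolding h2_eq omega_plus_eq
    using crossing_cos_sin_sq s_pos omega_x_root(2)[OF \<open>?x \<le> 1/3\<close>] by simp
qed

lemma h2_omega_plus_bounds:
  assumes "\<tau> \<le> tau_star s Y"
  shows "h2 s Y (omega_plus s Y \<tau>) \<tau> \<in> {-1..1}"
proof -
  have "(h2 s Y (omega_plus s Y \<tau>) \<tau>)^2 \<le> 1"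
    using h2_omega_plus_sq[OF assms] by (metis le_add_same_cancel1 zero_le_power2)
  then show ?thesis using abs_le_square_iff[of _ 1] by (auto simp: abs_le_iff)
qed

lemma h2_omega_plus_strict:
  assumes "\<tau> < tau_star s Y"
  shows "h2 s Y (omega_plus s Y \<tau>) \<tau> \<in> {-1<..<1}"
proof -
  have "0 < crossing_sin s (xplus s Y \<tau>) (omega_plus s Y \<tau>)"
    unfolding omega_plus_eq using crossing_sin_pos s_pos xplus_pos xplus_less_third_iff assms by simp
  then have "0 < (crossing_sin s (xplus s Y \<tau>) (omega_plus s Y \<tau>))^2" by simp
  then have "(h2 s Y (omega_plus s Y \<tau>) \<tau>)^2 < 1"
    using h2_omega_plus_sq[of \<tau>] assms by linarith
  then show ?thesis by (auto simp: abs_square_less_1 abs_less_iff)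
qed

lemma theta_bounds: "\<tau> < tau_star s Y \<Longrightarrow> 0 < theta s Y \<tau> \<and> theta s Y \<tau> < pi"
  unfolding theta_def using arccos_lt_bounded h2_omega_plus_strict by simp

lemma theta_tau_star: "theta s Y (tau_star s Y) = pi"
proof -
  have "h2 s Y (omega_plus s Y (tau_star s Y)) (tau_star s Y) = -1"
    unfolding omega_plus_tau_star h2_eq xplus_tau_star crossing_cos_def using s_pos
    by (simp add: field_simps power2_eq_square)
  then show ?thesis unfolding theta_def by simp
qed

lemma continuous_on_xplus: "continuous_on A (xplus s Y)"
  unfolding xplus_def by (intro continuous_intros)

lemma continuous_on_omega_plus: "continuous_on A (omega_plus s Y)"
  unfolding omega_plus_def xplus_def Let_def by (intro continuous_intros)

lemma continuous_on_theta: "continuous_on {..tau_star s Y} (theta s Y)"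
proof -
  have "s * ((1 - 2 * xplus s Y \<tau>)^2 + (omega_plus s Y \<tau>)^2) \<noteq> 0" if "\<tau> \<le> tau_star s Y" for \<tau>
    using that s_pos xplus_le_third_iff[of \<tau>] by (simp add: add_pos_nonneg)
  then have "continuous_on {..tau_star s Y} (\<lambda>\<tau>. h2 s Y (omega_plus s Y \<tau>) \<tau>)"
    unfolding h2_def Let_def
    by (intro continuous_intros continuous_on_omega_plus continuous_on_xplus) auto
  then show ?thesis
    unfolding theta_def using h2_omega_plus_bounds by (intro continuous_intros) auto
qed

lemma imag_root_imp_crossing:
  assumes "0 \<le> \<tau>" "\<tau> < tau_c s Y" "0 < \<omega>" "charC s Y \<tau> (\<i> * of_real \<omega>) = 0"
  shows "\<exists>n. \<tau> \<in> crossings s Y n"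
proof -
  define x where "x = xplus s Y \<tau>"
  have sys: "imag_root_system s x \<omega> (cos (\<omega> * \<tau>)) (sin (\<omega> * \<tau>))"
    using assms(4) unfolding charC_imag_root_iff x_def .
  then have freq: "freq_poly s x \<omega> = 0" by (rule imag_root_system_freq_poly) simp
  have "x < 1/3"
  proof -
    have "0 < \<omega>^4 + x^2 * \<omega>^2" using assms(3) by (simp add: add_pos_nonneg)
    then have "0 < s^2 * (1 - x) * (1 - 3 * x)" using freq unfolding freq_poly_def by simp
    moreover have "0 < s^2 * (1 - x)"
      using assms(2) s_pos xplus_less_one_iff unfolding x_def by simp
    ultimately show ?thesis using zero_less_mult_pos by fastforce
  qed
  then have "\<tau> < tau_star s Y" using xplus_less_third_iff unfolding x_def by simp
  have \<omega>_x: "\<omega> = omega_x s x" using omega_x_unique[OF assms(3) freq] .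
  then have \<omega>: "\<omega> = omega_plus s Y \<tau>" unfolding omega_plus_eq x_def .
  have cos_sin: "cos (\<omega> * \<tau>) = crossing_cos s x \<omega>" "sin (\<omega> * \<tau>) = crossing_sin s x \<omega>"
    using sys imag_root_system_iff[OF s_pos assms(3)] by simp_all
  have "0 < crossing_sin s x \<omega>"
    unfolding \<omega>_x using crossing_sin_pos[OF s_pos _ \<open>x < 1/3\<close>] xplus_pos x_def by simp
  then have "0 < sin (\<omega> * \<tau>)" unfolding cos_sin .
  moreover have "0 < \<tau>" using calculation assms(1) by (cases "\<tau> = 0") simp_all
  ultimately obtain n :: nat where "\<omega> * \<tau> = arccos (cos (\<omega> * \<tau>)) + 2 * real n * pi"
    using eq_arccos_cos_plus_2npi[of "\<omega> * \<tau>"] assms(3) by auto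
  moreover have "theta s Y \<tau> = arccos (cos (\<omega> * \<tau>))"
    unfolding theta_def h2_eq cos_sin(1) using \<omega> x_def by simp
  ultimately have "\<tau> * omega_plus s Y \<tau> = theta s Y \<tau> + 2 * real n * pi"
    unfolding \<omega>[symmetric] by (simp add: mult.commute)
  then show ?thesis unfolding crossings_def using \<open>0 < \<tau>\<close> \<open>\<tau> < tau_star s Y\<close> by blast
qed

lemma crossing_imp_imag_root:
  assumes "\<tau> \<in> crossings s Y n"
  shows "charC s Y \<tau> (\<i> * of_real (omega_plus s Y \<tau>)) = 0"
proof -
  define x where "x = xplus s Y \<tau>"
  define \<omega> where "\<omega> = omega_plus s Y \<tau>"
  define c where "c = crossing_cos s x \<omega>"
  have "\<tau> < tau_star s Y" and eq: "\<omega> * \<tau> = arccos c + 2 * real n * pi"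
    using assms unfolding crossings_def theta_def h2_eq c_def x_def \<omega>_def by (auto simp: mult.commute)
  have c: "c \<in> {-1..1}" and sin_sq: "1 - c^2 = (crossing_sin s x \<omega>)^2"
    using h2_omega_plus_bounds h2_omega_plus_sq \<open>\<tau> < tau_star s Y\<close>
    unfolding c_def x_def \<omega>_def h2_eq by (auto simp: algebra_simps)
  have "0 < crossing_sin s x \<omega>"
    using crossing_sin_pos[OF s_pos] xplus_pos xplus_less_third_iff
      \<open>\<tau> < tau_star s Y\<close> unfolding x_def \<omega>_def omega_plus_eq by simp
  then have "cos (\<omega> * \<tau>) = c" "sin (\<omega> * \<tau>) = crossing_sin s x \<omega>"
    using c unfolding eq cos_add sin_add cos_2npi sin_2npi
    by (simp_all add: sin_arccos_abs abs_le_iff sin_sq)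
  moreover have "0 < \<omega>" unfolding \<omega>_def using omega_plus_pos \<open>\<tau> < tau_star s Y\<close> .
  ultimately show ?thesis
    unfolding charC_imag_root_iff x_def[symmetric] \<omega>_def[symmetric]
    using imag_root_system_iff[OF s_pos] c_def by simp
qed

lemma has_imag_pair_iff_crossing:
  assumes "0 \<le> \<tau>" "\<tau> < tau_c s Y"
  shows "has_imag_pair s Y \<tau> \<longleftrightarrow> (\<exists>n. \<tau> \<in> crossings s Y n)"
proof
  assume "has_imag_pair s Y \<tau>"
  then show "\<exists>n. \<tau> \<in> crossings s Y n"
    unfolding has_imag_pair_iff using imag_root_imp_crossing[OF assms] by blast
next
  assume "\<exists>n. \<tau> \<in> crossings s Y n"
  then obtain n where n: "\<tau> \<in> crossings s Y n" ..
  then have "0 < omega_plus s Y \<tau>"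
    using omega_plus_pos unfolding crossings_def by simp
  then show "has_imag_pair s Y \<tau>"
    unfolding has_imag_pair_iff using crossing_imp_imag_root[OF n] by blast
qed

lemma continuous_on_phase_gap: "continuous_on {0..tau_star s Y} (phase_gap s Y)"
  unfolding phase_gap_def
  using continuous_on_subset[OF continuous_on_theta, of "{0..tau_star s Y}"]
  by (intro continuous_intros continuous_on_omega_plus) auto

lemma phase_gap_zero: "phase_gap s Y 0 < 0"
  unfolding phase_gap_def using theta_bounds tau_star_pos by simp

lemma phase_gap_tau_star: "phase_gap s Y (tau_star s Y) = - pi"
  unfolding phase_gap_def omega_plus_tau_star theta_tau_star by simp

lemma crossings_eq:
  "crossings s Y n = {\<tau> \<in> {0..tau_star s Y}. phase_gap s Y \<tau> = 2 * real n * pi}"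
proof -
  have "0 \<le> 2 * real n * pi" by simp
  then have "phase_gap s Y 0 \<noteq> 2 * real n * pi" "phase_gap s Y (tau_star s Y) \<noteq> 2 * real n * pi"
    using phase_gap_zero phase_gap_tau_star pi_gt_zero by linarith+
  then have "\<tau> \<in> crossings s Y n \<longleftrightarrow> \<tau> \<in> {0..tau_star s Y} \<and> phase_gap s Y \<tau> = 2 * real n * pi" for \<tau>
    unfolding crossings_def by (cases "\<tau> = 0 \<or> \<tau> = tau_star s Y") (auto simp: phase_gap_def)
  then show ?thesis by blast
qed

lemma compact_crossings: "compact (crossings s Y n)"
proof -
  have "closed (crossings s Y n)"
    unfolding crossings_eq
    by (intro continuous_closed_preimage_constant continuous_on_phase_gap) simp
  then show ?thesis
    unfolding compact_eq_bounded_closed crossings_eq by (auto intro: bounded_subset[of "{0..tau_star s Y}"])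
qed

lemma crossings_bracket:
  assumes "\<tau> \<in> {0..tau_star s Y}" "2 * real n * pi \<le> phase_gap s Y \<tau>"
  obtains t1 t2 where "t1 \<in> crossings s Y n" "t2 \<in> crossings s Y n" "t1 \<le> \<tau>" "\<tau> \<le> t2"
proof -
  have cont: "continuous_on {0..\<tau>} (phase_gap s Y)" "continuous_on {\<tau>..tau_star s Y} (phase_gap s Y)"
    using assms(1) by (auto intro: continuous_on_subset[OF continuous_on_phase_gap])
  have "0 \<le> 2 * real n * pi" by simp
  then have "phase_gap s Y 0 \<le> 2 * real n * pi" "phase_gap s Y (tau_star s Y) \<le> 2 * real n * pi"
    using phase_gap_zero phase_gap_tau_star pi_gt_zero by linarith+
  then have "\<exists>t1\<ge>0. t1 \<le> \<tau> \<and> phase_gap s Y t1 = 2 * real n * pi"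
    and "\<exists>t2\<ge>\<tau>. t2 \<le> tau_star s Y \<and> phase_gap s Y t2 = 2 * real n * pi"
    using IVT'[OF _ assms(2) _ cont(1)] IVT2'[OF _ assms(2) _ cont(2)] assms(1) by auto
  then show thesis using that assms(1) unfolding crossings_eq by force
qed

lemma two_crossings:
  assumes "\<tau> \<in> {0..tau_star s Y}" "(2 * real n + 1) * pi \<le> \<tau> * omega_plus s Y \<tau>"
  shows "\<exists>t1 t2. t1 < t2 \<and> t1 \<in> crossings s Y n \<and> t2 \<in> crossings s Y n"
proof -
  have "0 < (2 * real n + 1) * pi" by simp
  then have "0 < \<tau> * omega_plus s Y \<tau>" using assms(2) by linarith
  then have "\<tau> \<noteq> 0" "\<tau> \<noteq> tau_star s Y" using omega_plus_tau_star by auto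
  then have "\<tau> < tau_star s Y" using assms(1) by simp
  then have gap: "2 * real n * pi < phase_gap s Y \<tau>"
    using assms(2) theta_bounds[of \<tau>] unfolding phase_gap_def by (simp add: algebra_simps)
  obtain t1 t2 where t12: "t1 \<in> crossings s Y n" "t2 \<in> crossings s Y n" "t1 \<le> \<tau>" "\<tau> \<le> t2"
    using assms(1) less_imp_le[OF gap] by (rule crossings_bracket)
  have "t1 \<noteq> \<tau>" "t2 \<noteq> \<tau>" using t12(1,2) gap unfolding crossings_eq by auto
  then have "t1 < t2" using t12(3,4) by simp
  with t12(1,2) show ?thesis by blast
qed

lemma crossings_empty:
  assumes "\<forall>\<tau>\<in>{0..tau_star s Y}. \<tau> * omega_plus s Y \<tau> \<le> M" "M \<le> 2 * real n * pi"
  shows "crossings s Y n = {}"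
proof -
  have "\<tau> * omega_plus s Y \<tau> \<noteq> theta s Y \<tau> + 2 * real n * pi" if "0 < \<tau>" "\<tau> < tau_star s Y" for \<tau>
  proof -
    have "\<tau> * omega_plus s Y \<tau> \<le> M" using assms(1) that by simp
    then show ?thesis using assms(2) theta_bounds[of \<tau>] that(2) by linarith
  qed
  then show ?thesis unfolding crossings_def by blast
qed

lemma imag_pair_delays_eq: "imag_pair_delays s Y = (\<Union>n. crossings s Y n)"
proof (intro set_eqI iffI)
  fix \<tau> assume "\<tau> \<in> imag_pair_delays s Y"
  then have "0 \<le> \<tau>" "\<tau> < tau_c s Y" "has_imag_pair s Y \<tau>" unfolding imag_pair_delays_def by auto
  then show "\<tau> \<in> (\<Union>n. crossings s Y n)" using has_imag_pair_iff_crossing by simp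
next
  fix \<tau> assume "\<tau> \<in> (\<Union>n. crossings s Y n)"
  then obtain n where n: "\<tau> \<in> crossings s Y n" by blast
  then have "0 \<le> \<tau>" "\<tau> < tau_c s Y"
    using tau_star_less_tau_c unfolding crossings_def by auto
  then show "\<tau> \<in> imag_pair_delays s Y"
    unfolding imag_pair_delays_def using has_imag_pair_iff_crossing n by auto
qed

lemma crossings_zero_extremes:
  assumes "crossings s Y 0 \<noteq> {}"
  obtains a b where "least_elem (crossings s Y 0) a" "greatest_elem (crossings s Y 0) b"
    "least_elem (imag_pair_delays s Y) a" "greatest_elem (imag_pair_delays s Y) b"
proof -
  obtain a b where a: "a \<in> crossings s Y 0" "\<forall>t\<in>crossings s Y 0. a \<le> t"
    and b: "b \<in> crossings s Y 0" "\<forall>t\<in>crossings s Y 0. t \<le> b"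
    using compact_attains_inf compact_attains_sup compact_crossings assms by metis
  have bounds: "a \<le> \<tau> \<and> \<tau> \<le> b" if \<tau>: "\<tau> \<in> imag_pair_delays s Y" for \<tau>
  proof -
    obtain n where "\<tau> \<in> crossings s Y n" using \<tau> unfolding imag_pair_delays_eq by blast
    then have "\<tau> \<in> {0..tau_star s Y}" "2 * real 0 * pi \<le> phase_gap s Y \<tau>"
      unfolding crossings_eq by auto
    then obtain t1 t2 where "t1 \<in> crossings s Y 0" "t2 \<in> crossings s Y 0" "t1 \<le> \<tau>" "\<tau> \<le> t2"
      by (rule crossings_bracket)
    then show ?thesis using a(2) b(2) by force
  qed
  have "a \<in> imag_pair_delays s Y" "b \<in> imag_pair_delays s Y"
    using a(1) b(1) unfolding imag_pair_delays_eq by blast+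
  with a b bounds show thesis
    by (intro that) (auto simp: least_elem_def greatest_elem_def)
qed

lemma charC_right_half_plane_root_family:
  "right_half_plane_root_family (charC s Y) {0..<tau_c s Y} (2 * s + 2)"
proof
  have "continuous_on UNIV (\<lambda>p. charC s Y (fst p) (snd p))"
    unfolding charC_eq xplus_def by (intro continuous_intros)
  then show "continuous_on UNIV (\<lambda>(t, z). charC s Y t z)"
    by (simp add: case_prod_beta)
  show "charC s Y t holomorphic_on {z. 0 < Re z}" for t
    unfolding charC_def by (intro holomorphic_intros)
  show "cmod z \<le> 2 * s + 2" if "t \<in> {0..<tau_c s Y}" "charC s Y t z = 0" "0 \<le> Re z" for t z
  proof (rule charC_root_norm_le[OF s_pos _ _ _ that(2,3)])
    show "0 \<le> t" "0 \<le> xplus s Y t" "xplus s Y t \<le> 1"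
      using that(1) xplus_pos[of t] xplus_less_one_iff[of t] by auto
  qed
qed

lemma LAS_zero: "LAS s Y 0"
  unfolding LAS_def
proof (intro allI impI)
  fix z assume "charC s Y 0 z = 0"
  then have "z^2 + of_real (xplus s Y 0) * z + of_real (s * (1 - xplus s Y 0)) = 0"
    unfolding charC_eq by (simp add: algebra_simps)
  moreover have "0 < xplus s Y 0" "xplus s Y 0 < 1"
    using xplus_pos xplus_less_one_iff tau_star_pos tau_star_less_tau_c by auto
  ultimately show "Re z < 0"
    using s_pos by (intro quadratic_root_Re_neg[of "xplus s Y 0" "s * (1 - xplus s Y 0)"]) simp_all
qed

lemma LAS_beyond_tau_star:
  assumes "tau_star s Y < \<tau>" "\<tau> < tau_c s Y"
  shows "LAS s Y \<tau>"
  unfolding LAS_def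
proof (intro allI impI)
  fix z assume root: "charC s Y \<tau> z = 0"
  define x where "x = xplus s Y \<tau>"
  have "\<not> x \<le> 1/3" unfolding x_def xplus_le_third_iff using assms(1) by simp
  then have x: "1/3 < x" "x < 1" using assms(2) xplus_less_one_iff unfolding x_def by auto
  define P where "P = z^2 + of_real (s + x) * z + of_real (s * x)"
  define Q where "Q = of_real (s * (1 - 2 * x)) - of_real s * z"
  have "P = - Q * exp (- z * of_real \<tau>)"
    using root unfolding charC_eq x_def P_def Q_def by (simp add: algebra_simps add_eq_0_iff)
  then have "cmod P = cmod Q * exp (- (Re z * \<tau>))" by (simp add: norm_mult norm_exp_eq_Re)
  moreover have "exp (- (Re z * \<tau>)) \<le> 1" if "0 \<le> Re z"
    using that assms(1) tau_star_pos by simp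
  ultimately have "cmod P \<le> cmod Q" if "0 \<le> Re z"
    using that by (simp add: mult_left_le)
  moreover have "cmod Q < cmod P" if "0 \<le> Re z"
    using delay_coeff_dominated[OF s_pos x that] unfolding P_def Q_def .
  ultimately show "Re z < 0" by force
qed

lemma LAS_on_connected:
  assumes "connected K" "K \<subseteq> {0..<tau_c s Y}" "t0 \<in> K" "LAS s Y t0"
    and "\<forall>t\<in>K. \<not> has_imag_pair s Y t" "\<tau> \<in> K"
  shows "LAS s Y \<tau>"
proof -
  have "charC s Y t z \<noteq> 0" if "t \<in> K" "Re z = 0" for t z
  proof (cases "z = 0")
    case True
    have "xplus s Y t < 1" using that(1) assms(2) xplus_less_one_iff by auto
    then show ?thesis unfolding True charC_zero using s_pos by simp
  next
    case False
    then show ?thesis using imag_axis_root_imp_has_imag_pair that assms(5) by blast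
  qed
  then show ?thesis
    using right_half_plane_root_family.stable_on_connected[
        OF charC_right_half_plane_root_family assms(1-3)] assms(4,6)
    unfolding LAS_def by blast
qed

lemma LAS_outside_imag_pair_delays:
  assumes "least_elem (imag_pair_delays s Y) a" "greatest_elem (imag_pair_delays s Y) b"
    and "(0 \<le> \<tau> \<and> \<tau> < a) \<or> (b < \<tau> \<and> \<tau> < tau_c s Y)"
  shows "LAS s Y \<tau>"
proof -
  have no_imag: "\<not> has_imag_pair s Y t" if "0 \<le> t" "t < tau_c s Y" "t < a \<or> b < t" for t
  proof
    assume "has_imag_pair s Y t"
    then have "t \<in> imag_pair_delays s Y" using that(1,2) unfolding imag_pair_delays_def by simp
    then have "a \<le> t" "t \<le> b" using assms(1,2) unfolding least_elem_def greatest_elem_def by auto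
    then show False using that(3) by linarith
  qed
  obtain n where "b \<in> crossings s Y n"
    using assms(2) unfolding greatest_elem_def imag_pair_delays_eq by blast
  then have "b < tau_star s Y" unfolding crossings_def by simp
  from assms(3) show ?thesis
  proof
    assume "0 \<le> \<tau> \<and> \<tau> < a"
    moreover have "a \<le> tau_c s Y"
      using assms(1) unfolding least_elem_def imag_pair_delays_def by auto
    ultimately show ?thesis
      using LAS_on_connected[of "{0..<a}" 0 \<tau>] LAS_zero no_imag by simp
  next
    assume \<tau>: "b < \<tau> \<and> \<tau> < tau_c s Y"
    define t0 where "t0 = (tau_star s Y + tau_c s Y) / 2"
    have t0: "tau_star s Y < t0" "t0 < tau_c s Y"
      unfolding t0_def using tau_star_less_tau_c by auto
    have "0 \<le> b"
      using assms(2) unfolding greatest_elem_def imag_pair_delays_def by auto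
    then have "{b<..<tau_c s Y} \<subseteq> {0..<tau_c s Y}"
      "\<forall>t\<in>{b<..<tau_c s Y}. \<not> has_imag_pair s Y t"
      using no_imag by auto
    moreover have "t0 \<in> {b<..<tau_c s Y}" using t0 \<open>b < tau_star s Y\<close> by auto
    ultimately show ?thesis
      using LAS_on_connected[of "{b<..<tau_c s Y}" t0 \<tau>] LAS_beyond_tau_star[OF t0] \<tau> by simp
  qed
qed

end

theorem corollary3p5:
  fixes s Y :: real and N :: nat
  assumes "s > 0" and "Y > 3 * s"
    and "\<exists>\<tau>m\<in>{0..tau_star s Y}.
           (\<forall>\<tau>\<in>{0..tau_star s Y}. \<tau> * omega_plus s Y \<tau> \<le> \<tau>m * omega_plus s Y \<tau>m)
         \<and> (2 * real N + 1) * pi \<le> \<tau>m * omega_plus s Y \<tau>m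
         \<and> \<tau>m * omega_plus s Y \<tau>m \<le> 2 * (real N + 1) * pi"
  shows "(\<forall>n\<le>N. \<exists>t1 t2. t1 < t2 \<and> t1 \<in> crossings s Y n \<and> t2 \<in> crossings s Y n)
       \<and> (\<forall>n\<ge>N + 1. crossings s Y n = {})
       \<and> ((\<exists>n. crossings s Y n \<noteq> {}) \<longrightarrow>
            (\<exists>a b. least_elem (crossings s Y 0) a \<and> greatest_elem (crossings s Y 0) b
               \<and> least_elem {\<tau>. 0 \<le> \<tau> \<and> \<tau> < tau_c s Y \<and> has_imag_pair s Y \<tau>} a
               \<and> greatest_elem {\<tau>. 0 \<le> \<tau> \<and> \<tau> < tau_c s Y \<and> has_imag_pair s Y \<tau>} b))
       \<and> (\<exists>a b. least_elem (crossings s Y 0) a \<and> greatest_elem (crossings s Y 0) b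
            \<and> (\<forall>\<tau>. (0 \<le> \<tau> \<and> \<tau> < a) \<or> (b < \<tau> \<and> \<tau> < tau_c s Y) \<longrightarrow> LAS s Y \<tau>))"
proof -
  obtain \<tau>m where \<tau>m: "\<tau>m \<in> {0..tau_star s Y}"
    and max: "\<forall>\<tau>\<in>{0..tau_star s Y}. \<tau> * omega_plus s Y \<tau> \<le> \<tau>m * omega_plus s Y \<tau>m"
    and lo: "(2 * real N + 1) * pi \<le> \<tau>m * omega_plus s Y \<tau>m"
    and hi: "\<tau>m * omega_plus s Y \<tau>m \<le> 2 * (real N + 1) * pi"
    using assms(3) by blast
  have two: "\<exists>t1 t2. t1 < t2 \<and> t1 \<in> crossings s Y n \<and> t2 \<in> crossings s Y n" if "n \<le> N" for n
  proof -
    have "(2 * real n + 1) * pi \<le> (2 * real N + 1) * pi" using that by simp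
    then show ?thesis using two_crossings[OF assms(1,2) \<tau>m order_trans[OF _ lo]] by blast
  qed
  have none: "crossings s Y n = {}" if "N + 1 \<le> n" for n
  proof -
    have "2 * (real N + 1) * pi \<le> 2 * real n * pi" using that by simp
    then show ?thesis using crossings_empty[OF assms(1,2) max order_trans[OF hi]] by blast
  qed
  obtain a b where ab: "least_elem (crossings s Y 0) a" "greatest_elem (crossings s Y 0) b"
    "least_elem (imag_pair_delays s Y) a" "greatest_elem (imag_pair_delays s Y) b"
    using crossings_zero_extremes[OF assms(1,2)] two[of 0] by blast
  show ?thesis
    using two none ab LAS_outside_imag_pair_delays[OF assms(1,2) ab(3,4)]
    unfolding imag_pair_delays_def by blast
qed

end
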